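(* Let $d$ be odd and $n\ge d+1$. Then: (i) if $n=d+1$, $C^d_n=A_n$; (ii) if $n=d+2$, $C^d_n=A_n\cap(S_{\frac{n-1}{2}}\times S_{\frac{n+1}{2}})$, where $S_{\frac{n-1}{2}}$ permutes the even indices and $S_{\frac{n+1}{2}}$ permutes the odd indices in $\{1,\dots,n\}$; (iii) if $n\ge d+3$ and $\frac{d+1}{2}$ is even, $C^d_n\cong\mathbb Z/2$; (iv) if $n\ge d+3$ and $\frac{d+1}{2}$ is odd, $C^d_n$ is trivial.
   Context: For $n\ge d+1$, let $C^d_n\subseteq S_n$ be the subgroup of permutations $\sigma$ with the following property: for all $x_1,\dots,x_n\in\mathbb R^d$ such that the $(d+1)\times n$ matrix with columns $\binom{1}{x_1},\dots,\binom{1}{x_n}$ has all maximal minors positive, the matrix with columns $\binom{1}{x_{\sigma(1)}},\dots,\binom{1}{x_{\sigma(n)}}$ also has all maximal minors positive. Equivalently, $C^d_n$ is the stabiliser, under column permutation, of the set of such positive matrices. $A_n$ is the alternating group. *)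

theory Defs
  imports "Jordan_Normal_Form.Determinant" "HOL-Algebra.Sym_Groups" "HOL-Algebra.Elementary_Groups"
begin

text \<open>A configuration of n points in R^d is a function x, where x i k is the k-th
 coordinate (k < d) of the i-th point (1 <= i <= n).  The associated (d+1) x n matrix
 has column i equal to (1, x i 0, ..., x i (d-1)).\<close>

definition lifted_entry :: "(nat \<Rightarrow> nat \<Rightarrow> real) \<Rightarrow> nat \<Rightarrow> nat \<Rightarrow> real" where
  "lifted_entry x i r = (if r = 0 then 1 else x i (r - 1))"

definition max_minor :: "nat \<Rightarrow> (nat \<Rightarrow> nat \<Rightarrow> real) \<Rightarrow> (nat \<Rightarrow> nat) \<Rightarrow> real" where
  "max_minor d x c = det (mat (d+1) (d+1) (\<lambda>(r, k). lifted_entry x (c k) r))"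

definition all_minors_pos :: "nat \<Rightarrow> nat \<Rightarrow> (nat \<Rightarrow> nat \<Rightarrow> real) \<Rightarrow> bool" where
  "all_minors_pos d n x \<longleftrightarrow>
     (\<forall>c. strict_mono_on {..<d+1} c \<and> (\<forall>k<d+1. c k \<in> {1..n}) \<longrightarrow> max_minor d x c > 0)"

definition C_group :: "nat \<Rightarrow> nat \<Rightarrow> (nat \<Rightarrow> nat) set" where
  "C_group d n = {\<sigma>. \<sigma> permutes {1..n} \<and>
      (\<forall>x. all_minors_pos d n x \<longrightarrow> all_minors_pos d n (\<lambda>j. x (\<sigma> j)))}"

end

theory Submission
  imports Defs "HOL-Library.Infinite_Set"
begin

(* The moment curve x_i = (i, i^2, ..., i^d) is a positive configuration whose maximal minors
   are Vandermonde products, so after relabelling the points by sigma the minor on a column set S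
   has sign (-1)^(number of inversions of sigma on S).  Conversely, for any positive configuration
   a relabelled minor is the sign of the sorting permutation of sigma on S times an original
   minor.  Hence C^d_n consists of the permutations with an even number of inversions on every
   (d+1)-subset of {1..n}.

   For n = d+1 this says that sigma is even.  For n = d+2, removing j from {1..n} changes the
   inversion count by j + sigma j modulo 2; as n is odd, sigma cannot map all odd numbers to even
   ones, so sigma is even and preserves parity.  For n >= d+3, comparing the subsets S + i and
   S + j, and using that d is odd, shows that whether sigma inverts a pair does not depend on the
   pair: sigma is the identity or the reversal, and the reversal has (d+1)d/2 inversions on every
   (d+1)-subset, an even number iff (d+1)/2 is even. *)

section \<open>Vandermonde determinants\<close>

lemma prod_lessThan_Suc_pairs:
  fixes t :: "nat \<Rightarrow> 'a::comm_ring_1"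
  shows "(\<Prod>b<Suc m. \<Prod>a<b. t b - t a) =
    (\<Prod>k<m. t (Suc k) - t 0) * (\<Prod>b<m. \<Prod>a<b. t (Suc b) - t (Suc a))"
proof -
  have "(\<Prod>b<Suc m. \<Prod>a<b. t b - t a) = (\<Prod>b<m. \<Prod>a<Suc b. t (Suc b) - t a)"
    by (simp only: prod.lessThan_Suc_shift) (simp del: prod.lessThan_Suc)
  also have "\<dots> = (\<Prod>b<m. (t (Suc b) - t 0) * (\<Prod>a<b. t (Suc b) - t (Suc a)))"
    by (simp only: prod.lessThan_Suc_shift)
  finally show ?thesis by (simp add: prod.distrib)
qed

lemma det_mat_scale_cols:
  fixes f :: "nat \<Rightarrow> nat \<Rightarrow> 'a::comm_ring_1"
  shows "det (mat m m (\<lambda>(r, k). f r k * g k)) = (\<Prod>k<m. g k) * det (mat m m (\<lambda>(r, k). f r k))"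
proof -
  define V where "V = mat m m (\<lambda>(r, k). f r k)"
  define D where "D = mat m m (\<lambda>(i, j). if i = j then g j else 0)"
  have V: "V \<in> carrier_mat m m" and D: "D \<in> carrier_mat m m"
    unfolding V_def D_def by auto
  have "mat m m (\<lambda>(r, k). f r k * g k) = V * D"
  proof (rule eq_matI)
    fix i j assume ij: "i < dim_row (V * D)" "j < dim_col (V * D)"
    have "(V * D) $$ (i, j) = (\<Sum>l<m. V $$ (i, l) * D $$ (l, j))"
      using ij V D by (simp add: scalar_prod_def atLeast0LessThan)
    also have "\<dots> = (\<Sum>l<m. if l = j then f i j * g j else 0)"
      by (rule sum.cong) (use ij V D in \<open>auto simp: V_def D_def\<close>)
    finally show "mat m m (\<lambda>(r, k). f r k * g k) $$ (i, j) = (V * D) $$ (i, j)"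
      using ij V D by simp
  qed (auto simp: V_def D_def)
  moreover have "det D = (\<Prod>k<m. g k)"
    by (subst det_lower_triangular[OF _ D]) (auto simp: D_def prod_list_diag_prod atLeast0LessThan)
  ultimately show ?thesis
    using det_mult[OF V D] by (simp add: V_def mult.commute)
qed

lemma det_vandermonde_Suc:
  fixes t :: "nat \<Rightarrow> 'a::comm_ring_1"
  shows "det (mat (Suc m) (Suc m) (\<lambda>(r, k). t k ^ r)) =
    (\<Prod>k<m. t (Suc k) - t 0) * det (mat m m (\<lambda>(r, k). t (Suc k) ^ r))"
proof -
  define A where "A = mat (Suc m) (Suc m) (\<lambda>(r, k). t k ^ r)"
  define L where "L = mat (Suc m) (Suc m)
    (\<lambda>(i, j). (if i = j then 1 else 0) + (if Suc j = i then - t 0 else 0))"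
  define B where "B = mat m m (\<lambda>(r, k). t (Suc k) ^ r * (t (Suc k) - t 0))"
  have A: "A \<in> carrier_mat (Suc m) (Suc m)" and L: "L \<in> carrier_mat (Suc m) (Suc m)"
    unfolding A_def L_def by auto
  \<comment> \<open>L subtracts t 0 times row r - 1 from every row r > 0, which clears the first column.\<close>
  have LA: "L * A = four_block_mat (mat 1 1 (\<lambda>_. 1)) (mat 1 m (\<lambda>_. 1)) (0\<^sub>m m 1) B"
  proof (rule eq_matI)
    fix i j assume "i < dim_row (four_block_mat (mat 1 1 (\<lambda>_. 1)) (mat 1 m (\<lambda>_. 1)) (0\<^sub>m m 1) B)"
      "j < dim_col (four_block_mat (mat 1 1 (\<lambda>_. 1)) (mat 1 m (\<lambda>_. 1)) (0\<^sub>m m 1) B)"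
    then have i: "i < Suc m" and j: "j < Suc m" by (auto simp: B_def)
    have "(L * A) $$ (i, j) = (\<Sum>l<Suc m. L $$ (i, l) * A $$ (l, j))"
      using i j L A by (simp add: scalar_prod_def atLeast0LessThan)
    also have "\<dots> = (\<Sum>l<Suc m. (if l = i then t j ^ l else 0)
        + (if Suc l = i then - t 0 * t j ^ l else 0))"
      by (rule sum.cong) (use i j in \<open>auto simp: L_def A_def algebra_simps\<close>)
    also have "\<dots> = t j ^ i + (if i = 0 then 0 else - t 0 * t j ^ (i - 1))"
      using i by (cases i) (auto simp: sum.distrib)
    finally show "(L * A) $$ (i, j) =
        four_block_mat (mat 1 1 (\<lambda>_. 1)) (mat 1 m (\<lambda>_. 1)) (0\<^sub>m m 1) B $$ (i, j)"
      using i j by (cases i; cases j) (auto simp: four_block_mat_def B_def algebra_simps)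
  qed (auto simp: L_def A_def B_def four_block_mat_def)
  have "det L = 1"
    by (subst det_lower_triangular[OF _ L]) (auto simp: L_def prod_list_diag_prod)
  then have "det A = det (L * A)"
    using det_mult[OF L A] by simp
  also have "\<dots> = det B"
    unfolding LA by (subst det_four_block_mat_lower_left_zero_col) (auto simp: B_def det_def)
  also have "\<dots> = (\<Prod>k<m. t (Suc k) - t 0) * det (mat m m (\<lambda>(r, k). t (Suc k) ^ r))"
    unfolding B_def by (rule det_mat_scale_cols)
  finally show ?thesis
    unfolding A_def .
qed

lemma det_vandermonde:
  fixes t :: "nat \<Rightarrow> 'a::comm_ring_1"
  shows "det (mat m m (\<lambda>(r, k). t k ^ r)) = (\<Prod>b<m. \<Prod>a<b. t b - t a)"
proof (induction m arbitrary: t)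
  case 0
  then show ?case by (simp add: det_def)
next
  case (Suc m)
  then show ?case by (simp only: det_vandermonde_Suc Suc.IH prod_lessThan_Suc_pairs)
qed

lemma det_permute_cols:
  fixes f :: "nat \<Rightarrow> nat \<Rightarrow> 'a::comm_ring_1"
  assumes p: "p permutes {..<m}"
  shows "det (mat m m (\<lambda>(r, k). f r (p k))) = of_int (sign p) * det (mat m m (\<lambda>(r, k). f r k))"
proof -
  let ?A = "mat m m (\<lambda>(r, k). f r k)"
  have A: "transpose_mat ?A \<in> carrier_mat m m" by simp
  have "mat m m (\<lambda>(r, k). f r (p k)) = transpose_mat (mat m m (\<lambda>(i, j). transpose_mat ?A $$ (p i, j)))"
    using permutes_in_image[OF p] by (intro eq_matI) auto
  then have "det (mat m m (\<lambda>(r, k). f r (p k))) = det (mat m m (\<lambda>(i, j). transpose_mat ?A $$ (p i, j)))"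
    by (simp add: det_transpose[of _ m])
  also have "\<dots> = of_int (sign p) * det (transpose_mat ?A)"
    using p by (intro det_permute_rows[OF A]) (simp add: atLeast0LessThan)
  finally show ?thesis by (simp add: det_transpose[of _ m])
qed

section \<open>Inversions and the sign of a permutation\<close>

definition inversions_on :: "(nat \<Rightarrow> nat) \<Rightarrow> nat set \<Rightarrow> (nat \<times> nat) set" where
  "inversions_on \<sigma> S = {(i, j). i \<in> S \<and> j \<in> S \<and> i < j \<and> \<sigma> j < \<sigma> i}"

definition inverted :: "(nat \<Rightarrow> nat) \<Rightarrow> nat \<Rightarrow> nat \<Rightarrow> bool" where
  "inverted \<sigma> i j \<longleftrightarrow> (i < j \<and> \<sigma> j < \<sigma> i) \<or> (j < i \<and> \<sigma> i < \<sigma> j)"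

lemma inverted_commute: "inverted \<sigma> i j = inverted \<sigma> j i"
  unfolding inverted_def by auto

lemma inverted_iff:
  assumes "\<sigma> i \<noteq> \<sigma> s" "i \<noteq> s"
  shows "inverted \<sigma> i s \<longleftrightarrow> (\<sigma> s < \<sigma> i \<longleftrightarrow> i < s)"
  using assms by (auto simp: inverted_def)

lemma finite_inversions_on [simp]: "finite S \<Longrightarrow> finite (inversions_on \<sigma> S)"
  by (rule finite_subset[of _ "S \<times> S"]) (auto simp: inversions_on_def)

lemma inversions_on_id [simp]: "inversions_on id S = {}"
  by (auto simp: inversions_on_def)

lemma card_inversions_on_insert:
  assumes "finite S" "i \<notin> S"
  shows "card (inversions_on \<sigma> (insert i S)) = card (inversions_on \<sigma> S) + card {s\<in>S. inverted \<sigma> i s}"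
proof -
  define Ri where "Ri = {s\<in>S. i < s \<and> \<sigma> s < \<sigma> i}"
  define Le where "Le = {s\<in>S. s < i \<and> \<sigma> i < \<sigma> s}"
  have "inversions_on \<sigma> (insert i S) = inversions_on \<sigma> S \<union> (Pair i ` Ri \<union> (\<lambda>s. (s, i)) ` Le)"
    by (auto simp: inversions_on_def Ri_def Le_def)
  moreover have "inversions_on \<sigma> S \<inter> (Pair i ` Ri \<union> (\<lambda>s. (s, i)) ` Le) = {}"
    using assms(2) by (auto simp: inversions_on_def Ri_def Le_def)
  moreover have "Pair i ` Ri \<inter> (\<lambda>s. (s, i)) ` Le = {}"
    by (auto simp: Ri_def Le_def)
  moreover have "{s\<in>S. inverted \<sigma> i s} = Ri \<union> Le" "Ri \<inter> Le = {}"
    by (auto simp: Ri_def Le_def inverted_def)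
  moreover have "finite Ri" "finite Le"
    using assms(1) by (auto simp: Ri_def Le_def)
  ultimately show ?thesis
    using assms(1) by (simp add: card_Un_disjoint card_image inj_on_def)
qed

lemma inversions_on_comp_strict_mono:
  assumes "strict_mono_on (\<sigma> ` S) g"
  shows "inversions_on (g \<circ> \<sigma>) S = inversions_on \<sigma> S"
  using strict_mono_on_less[OF assms] by (auto simp: inversions_on_def)

lemma card_inversions_on_image_strict_mono:
  assumes "strict_mono_on S c"
  shows "card (inversions_on \<sigma> (c ` S)) = card (inversions_on (\<sigma> \<circ> c) S)"
proof -
  have "inversions_on \<sigma> (c ` S) = map_prod c c ` inversions_on (\<sigma> \<circ> c) S"
    using strict_mono_on_less[OF assms] by (fastforce simp: inversions_on_def)
  moreover have "inj_on (map_prod c c) (inversions_on (\<sigma> \<circ> c) S)"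
    using strict_mono_on_imp_inj_on[OF assms] by (auto simp: inj_on_def inversions_on_def)
  ultimately show ?thesis by (simp add: card_image)
qed

lemma sgn_prod_eq_power_card_neg:
  fixes f :: "'a \<Rightarrow> 'b::linordered_idom"
  assumes "finite A" "\<And>x. x \<in> A \<Longrightarrow> f x \<noteq> 0"
  shows "sgn (prod f A) = (-1) ^ card {x\<in>A. f x < 0}"
  using assms
proof (induction A rule: finite_induct)
  case empty
  then show ?case by simp
next
  case (insert a A)
  have "sgn (f a) = (if f a < 0 then -1 else 1)"
    using insert.prems by (auto simp: sgn_if)
  moreover have "{x\<in>insert a A. f x < 0} = (if f a < 0 then insert a {x\<in>A. f x < 0} else {x\<in>A. f x < 0})"
    by auto
  moreover have "card (insert a {x\<in>A. f x < 0}) = Suc (card {x\<in>A. f x < 0})"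
    using insert.hyps by simp
  ultimately show ?case
    using insert by (simp add: sgn_mult)
qed

lemma sgn_vandermonde_prod:
  assumes "inj_on g {..<m}"
  shows "sgn (\<Prod>b<m. \<Prod>a<b. real (g b) - real (g a)) = (-1) ^ card (inversions_on g {..<m})"
proof -
  let ?P = "SIGMA b:{..<m}. {..<b}"
  let ?f = "\<lambda>(b, a). real (g b) - real (g a)"
  have "(\<Prod>b<m. \<Prod>a<b. real (g b) - real (g a)) = prod ?f ?P"
    by (simp add: prod.Sigma)
  moreover have "?f p \<noteq> 0" if "p \<in> ?P" for p
    using that inj_onD[OF assms] by fastforce
  moreover have "inversions_on g {..<m} = prod.swap ` {p \<in> ?P. ?f p < 0}"
    by (force simp: inversions_on_def)
  then have "card (inversions_on g {..<m}) = card {p \<in> ?P. ?f p < 0}"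
    by (simp add: card_image)
  ultimately show ?thesis
    using sgn_prod_eq_power_card_neg[of ?P ?f] by simp
qed

lemma sign_eq_inversions_lessThan:
  assumes p: "p permutes {..<m}"
  shows "sign p = (-1) ^ card (inversions_on p {..<m})"
proof -
  have "det (mat m m (\<lambda>(r, k). real (p k) ^ r)) = of_int (sign p) * det (mat m m (\<lambda>(r, k). real k ^ r))"
    using det_permute_cols[OF p, of "\<lambda>r k. real k ^ r"] by simp
  moreover have "det (mat m m (\<lambda>(r, k). real k ^ r)) > 0"
    by (auto simp: det_vandermonde intro!: prod_pos)
  moreover have "sgn (det (mat m m (\<lambda>(r, k). real (p k) ^ r))) = (-1) ^ card (inversions_on p {..<m})"
    using sgn_vandermonde_prod[OF permutes_inj_on[OF p]] by (simp add: det_vandermonde)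
  ultimately have "real_of_int (sign p) = (-1) ^ card (inversions_on p {..<m})"
    by (cases rule: sign_cases[of p]) (auto simp: sgn_mult)
  then show ?thesis
    by (metis of_int_eq_iff of_int_minus of_int_1 of_int_power)
qed

lemma sign_eq_inversions:
  assumes "\<sigma> permutes S" "finite S"
  shows "sign \<sigma> = (-1) ^ card (inversions_on \<sigma> S)"
proof -
  obtain c where c: "bij_betw c {..<card S} S" "strict_mono_on {..<card S} c"
    using ex_bij_betw_strict_mono_card[OF assms(2)] by blast
  define f where "f = inv_into {..<card S} c"
  have f: "bij_betw f S {..<card S}"
    unfolding f_def by (rule bij_betw_inv_into[OF c(1)])
  define p where "p = map_permutation S f \<sigma>"
  have p: "p permutes {..<card S}"
    unfolding p_def by (rule map_permutation_permutes[OF f assms(1)])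
  have "c (p k) = \<sigma> (c k)" if "k < card S" for k
  proof -
    have "c k \<in> S" "f (c k) = k"
      using c(1) that by (auto simp: f_def bij_betw_def inv_into_f_f)
    then have "p k = f (\<sigma> (c k))"
      unfolding p_def using map_permutation_apply[OF bij_betw_imp_inj_on[OF f]] by metis
    moreover have "\<sigma> (c k) \<in> S"
      using \<open>c k \<in> S\<close> permutes_in_image[OF assms(1)] by simp
    ultimately show ?thesis
      using c(1) by (simp add: f_def bij_betw_def f_inv_into_f)
  qed
  then have "inversions_on (c \<circ> p) {..<card S} = inversions_on (\<sigma> \<circ> c) {..<card S}"
    by (auto simp: inversions_on_def)
  moreover have "inversions_on (c \<circ> p) {..<card S} = inversions_on p {..<card S}"
    using c(2) permutes_image[OF p] by (intro inversions_on_comp_strict_mono) simp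
  moreover have "c ` {..<card S} = S"
    using c(1) by (simp add: bij_betw_def)
  ultimately have "card (inversions_on \<sigma> S) = card (inversions_on p {..<card S})"
    using card_inversions_on_image_strict_mono[OF c(2), of \<sigma>] by simp
  moreover have "sign \<sigma> = sign p"
    unfolding p_def using sign_map_permutation[OF bij_betw_imp_inj_on[OF f] assms] by simp
  ultimately show ?thesis
    using sign_eq_inversions_lessThan[OF p] by simp
qed

lemma evenperm_iff_even_inversions:
  assumes "\<sigma> permutes S" "finite S"
  shows "evenperm \<sigma> \<longleftrightarrow> even (card (inversions_on \<sigma> S))"
  using sign_eq_inversions[OF assms] by (auto simp: sign_def minus_one_power_iff split: if_splits)

section \<open>Relabelling the points of a positive configuration\<close>

lemma strict_mono_factorization:
  fixes g :: "nat \<Rightarrow> 'a::wellorder"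
  assumes "inj_on g {..<m}"
  obtains c p where "strict_mono_on {..<m} c" "p permutes {..<m}"
    "\<And>k. k < m \<Longrightarrow> g k = c (p k)" "c ` {..<m} = g ` {..<m}"
proof -
  have "finite (g ` {..<m})" "card (g ` {..<m}) = m"
    using card_image[OF assms] by auto
  then obtain c where c: "bij_betw c {..<m} (g ` {..<m})" "strict_mono_on {..<m} c"
    using ex_bij_betw_strict_mono_card by metis
  define p where "p k = (if k < m then inv_into {..<m} c (g k) else k)" for k
  have "bij_betw (inv_into {..<m} c \<circ> g) {..<m} {..<m}"
    by (rule bij_betw_trans[OF inj_on_imp_bij_betw[OF assms] bij_betw_inv_into[OF c(1)]])
  then have "bij_betw p {..<m} {..<m}"
    by (rule bij_betw_cong[THEN iffD1, rotated]) (simp add: p_def)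
  then have "p permutes {..<m}"
    by (rule bij_imp_permutes) (simp add: p_def)
  moreover have "g k = c (p k)" if "k < m" for k
    using that c(1) by (auto simp: p_def bij_betw_def f_inv_into_f)
  moreover have "c ` {..<m} = g ` {..<m}"
    using c(1) by (simp add: bij_betw_def)
  ultimately show ?thesis
    using that c(2) by blast
qed

definition moment_curve :: "nat \<Rightarrow> nat \<Rightarrow> real" where
  "moment_curve i k = real i ^ (k + 1)"

lemma max_minor_moment_curve:
  "max_minor d moment_curve c = (\<Prod>b<d+1. \<Prod>a<b. real (c b) - real (c a))"
proof -
  have "mat (d+1) (d+1) (\<lambda>(r, k). lifted_entry moment_curve (c k) r) =
      mat (d+1) (d+1) (\<lambda>(r, k). real (c k) ^ r)"
    by (rule eq_matI) (auto simp: lifted_entry_def moment_curve_def)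
  then show ?thesis
    unfolding max_minor_def by (simp add: det_vandermonde)
qed

lemma max_minor_moment_curve_pos:
  assumes "strict_mono_on {..<d+1} c"
  shows "max_minor d moment_curve c > 0"
  unfolding max_minor_moment_curve
  by (intro prod_pos ballI) (auto intro: strict_mono_onD[OF assms])

lemma all_minors_pos_moment_curve: "all_minors_pos d n moment_curve"
  unfolding all_minors_pos_def using max_minor_moment_curve_pos by blast

lemma max_minor_relabel: "max_minor d (\<lambda>j. x (\<sigma> j)) c = max_minor d x (\<sigma> \<circ> c)"
  unfolding max_minor_def lifted_entry_def comp_def by simp

lemma max_minor_cong:
  assumes "\<And>k. k < d+1 \<Longrightarrow> c k = c' k"
  shows "max_minor d x c = max_minor d x c'"
proof -
  have "mat (d+1) (d+1) (\<lambda>(r, k). lifted_entry x (c k) r) =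
      mat (d+1) (d+1) (\<lambda>(r, k). lifted_entry x (c' k) r)"
    by (rule eq_matI) (auto simp: assms)
  then show ?thesis
    unfolding max_minor_def by simp
qed

lemma max_minor_permute:
  assumes "p permutes {..<d+1}"
  shows "max_minor d x (c \<circ> p) = of_int (sign p) * max_minor d x c"
  unfolding max_minor_def
  using det_permute_cols[OF assms, of "\<lambda>r k. lifted_entry x (c k) r"] by simp

lemma max_minor_reorder:
  assumes c: "strict_mono_on {..<d+1} c" and \<sigma>: "inj_on \<sigma> (c ` {..<d+1})"
  obtains c' where "strict_mono_on {..<d+1} c'" "c' ` {..<d+1} = \<sigma> ` c ` {..<d+1}"
    "\<And>x. max_minor d x (\<sigma> \<circ> c) = (-1) ^ card (inversions_on \<sigma> (c ` {..<d+1})) * max_minor d x c'"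
proof -
  have "inj_on (\<sigma> \<circ> c) {..<d+1}"
    by (rule comp_inj_on[OF strict_mono_on_imp_inj_on[OF c] \<sigma>])
  then obtain c' p where c': "strict_mono_on {..<d+1} c'" "p permutes {..<d+1}"
      "\<And>k. k < d+1 \<Longrightarrow> (\<sigma> \<circ> c) k = c' (p k)" "c' ` {..<d+1} = (\<sigma> \<circ> c) ` {..<d+1}"
    by (rule strict_mono_factorization) blast
  have "card (inversions_on \<sigma> (c ` {..<d+1})) = card (inversions_on (\<sigma> \<circ> c) {..<d+1})"
    by (rule card_inversions_on_image_strict_mono[OF c])
  also have "inversions_on (\<sigma> \<circ> c) {..<d+1} = inversions_on (c' \<circ> p) {..<d+1}"
    using c'(3) by (auto simp: inversions_on_def)
  also have "\<dots> = inversions_on p {..<d+1}"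
    using c'(1) permutes_image[OF c'(2)] by (intro inversions_on_comp_strict_mono) simp
  finally have "sign p = (-1) ^ card (inversions_on \<sigma> (c ` {..<d+1}))"
    using sign_eq_inversions_lessThan[OF c'(2)] by simp
  moreover have "max_minor d x (\<sigma> \<circ> c) = of_int (sign p) * max_minor d x c'" for x
    using max_minor_cong[of d "\<sigma> \<circ> c" "c' \<circ> p" x] c'(3) max_minor_permute[OF c'(2)] by simp
  ultimately show ?thesis
    using that c'(1,4) by (simp add: image_comp)
qed

definition subset_even_perms :: "nat \<Rightarrow> nat \<Rightarrow> (nat \<Rightarrow> nat) set" where
  "subset_even_perms k n = {\<sigma>. \<sigma> permutes {1..n} \<and>
     (\<forall>S. S \<subseteq> {1..n} \<and> card S = k \<longrightarrow> even (card (inversions_on \<sigma> S)))}"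

lemma C_group_imp_even_inversions:
  assumes \<sigma>: "\<sigma> \<in> C_group d n" and S: "S \<subseteq> {1..n}" "card S = d+1"
  shows "even (card (inversions_on \<sigma> S))"
proof -
  have \<sigma>_perm: "\<sigma> permutes {1..n}" and pos: "all_minors_pos d n (\<lambda>j. moment_curve (\<sigma> j))"
    using \<sigma> all_minors_pos_moment_curve unfolding C_group_def by auto
  obtain c where c: "bij_betw c {..<d+1} S" "strict_mono_on {..<d+1} c"
    using ex_bij_betw_strict_mono_card[of S] S finite_subset[OF S(1)] by auto
  then have S_eq: "c ` {..<d+1} = S"
    by (simp add: bij_betw_def)
  obtain c' where c': "strict_mono_on {..<d+1} c'" and
    eq: "max_minor d moment_curve (\<sigma> \<circ> c) =
      (-1) ^ card (inversions_on \<sigma> S) * max_minor d moment_curve c'"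
    using max_minor_reorder[OF c(2) permutes_inj_on[OF \<sigma>_perm]] S_eq by metis
  have "\<forall>k<d+1. c k \<in> {1..n}"
    using S_eq S(1) by auto
  then have "max_minor d moment_curve (\<sigma> \<circ> c) > 0"
    using pos c(2) unfolding all_minors_pos_def max_minor_relabel by blast
  then have "(-1::real) ^ card (inversions_on \<sigma> S) > 0"
    using eq max_minor_moment_curve_pos[OF c'] by (simp add: zero_less_mult_iff)
  then show ?thesis
    by (auto simp: minus_one_power_iff split: if_splits)
qed

lemma subset_even_perms_imp_C_group:
  assumes "\<sigma> \<in> subset_even_perms (d+1) n"
  shows "\<sigma> \<in> C_group d n"
proof -
  have \<sigma>: "\<sigma> permutes {1..n}"
    and ev: "\<And>S. S \<subseteq> {1..n} \<Longrightarrow> card S = d+1 \<Longrightarrow> even (card (inversions_on \<sigma> S))"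
    using assms unfolding subset_even_perms_def by auto
  have "all_minors_pos d n (\<lambda>j. x (\<sigma> j))" if x: "all_minors_pos d n x" for x
    unfolding all_minors_pos_def max_minor_relabel
  proof (intro allI impI)
    fix c assume c: "strict_mono_on {..<d+1} c \<and> (\<forall>k<d+1. c k \<in> {1..n})"
    obtain c' where c': "strict_mono_on {..<d+1} c'" "c' ` {..<d+1} = \<sigma> ` c ` {..<d+1}"
      and eq: "max_minor d x (\<sigma> \<circ> c) =
        (-1) ^ card (inversions_on \<sigma> (c ` {..<d+1})) * max_minor d x c'"
      using max_minor_reorder[OF conjunct1[OF c] permutes_inj_on[OF \<sigma>]] by metis
    have "even (card (inversions_on \<sigma> (c ` {..<d+1})))"
      using c card_image[OF strict_mono_on_imp_inj_on[of _ c]] by (intro ev) auto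
    moreover have "c ` {..<d+1} \<subseteq> {1..n}"
      using c by auto
    then have "\<sigma> ` c ` {..<d+1} \<subseteq> {1..n}"
      using permutes_image[OF \<sigma>] by (metis image_mono)
    then have "\<forall>k<d+1. c' k \<in> {1..n}"
      using c'(2) by blast
    then have "max_minor d x c' > 0"
      using x c'(1) unfolding all_minors_pos_def by blast
    ultimately show "max_minor d x (\<sigma> \<circ> c) > 0"
      using eq by simp
  qed
  then show ?thesis
    using \<sigma> unfolding C_group_def by blast
qed

lemma C_group_eq_subset_even_perms: "C_group d n = subset_even_perms (d+1) n"
proof (intro equalityI subsetI)
  fix \<sigma> assume \<sigma>: "\<sigma> \<in> C_group d n"
  then have "\<sigma> permutes {1..n}"
    by (simp add: C_group_def)
  then show "\<sigma> \<in> subset_even_perms (d+1) n"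
    unfolding subset_even_perms_def using C_group_imp_even_inversions[OF \<sigma>] by blast
qed (rule subset_even_perms_imp_C_group)

lemma card_Collect_permutes:
  assumes "\<sigma> permutes A"
  shows "card {s\<in>A. P (\<sigma> s)} = card {y\<in>A. P y}"
proof -
  have "{y\<in>A. P y} \<subseteq> \<sigma> ` {s\<in>A. P (\<sigma> s)}"
  proof
    fix y assume y: "y \<in> {y\<in>A. P y}"
    then obtain s where "s \<in> A" "y = \<sigma> s"
      using permutes_image[OF assms] by blast
    with y show "y \<in> \<sigma> ` {s\<in>A. P (\<sigma> s)}" by blast
  qed
  moreover have "\<sigma> ` {s\<in>A. P (\<sigma> s)} \<subseteq> {y\<in>A. P y}"
    using permutes_in_image[OF assms] by auto
  ultimately show ?thesis
    using card_image[OF permutes_inj_on[OF assms]] by (metis subset_antisym)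
qed

lemma card_less_in_interval: "k \<le> Suc n \<Longrightarrow> card {y\<in>{1..n}. y < k} = k - 1"
proof -
  assume "k \<le> Suc n"
  then have "{y\<in>{1..n}. y < k} = {1..<k}" by auto
  then show ?thesis by simp
qed

lemma card_greater_in_interval: "card {y\<in>{1..n}. k < y} = n - k"
proof -
  have "{y\<in>{1..n}. k < y} = {Suc k..n}" by auto
  then show ?thesis by simp
qed

lemma card_less_image_permutes:
  fixes \<sigma> :: "nat \<Rightarrow> nat"
  assumes "\<sigma> permutes {1..n}" "i \<in> {1..n}"
  shows "card {s\<in>{1..n}. \<sigma> s < \<sigma> i} = \<sigma> i - 1"
proof -
  have "\<sigma> i \<in> {1..n}"
    using permutes_in_image[OF assms(1)] assms(2) by simp
  then show ?thesis
    using card_Collect_permutes[OF assms(1), of "\<lambda>y. y < \<sigma> i"] card_less_in_interval[of "\<sigma> i" n]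
    by simp
qed

lemma card_Collect_add_card_Collect:
  assumes "finite S"
  shows "card {s\<in>S. P s} + card {s\<in>S. Q s} = 2 * card {s\<in>S. P s \<and> Q s} + card {s\<in>S. P s \<noteq> Q s}"
  using assms
proof (induction S rule: finite_induct)
  case empty
  then show ?case by simp
next
  case (insert x S)
  have split: "{s\<in>insert x S. R s} = (if R x then insert x {s\<in>S. R s} else {s\<in>S. R s})" for R
    by auto
  have "card (insert x {s\<in>S. R s}) = Suc (card {s\<in>S. R s})" for R
    using insert.hyps by simp
  with insert.IH show ?case
    by (simp only: split) auto
qed

lemma subset_card_eq_card_minus_one_iff:
  assumes "finite A" "A \<noteq> {}"
  shows "B \<subseteq> A \<and> card B = card A - 1 \<longleftrightarrow> (\<exists>a\<in>A. B = A - {a})"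
proof
  assume B: "B \<subseteq> A \<and> card B = card A - 1"
  have "card A > 0"
    using assms by (simp add: card_gt_0_iff)
  then have "B \<noteq> A"
    using B by auto
  then obtain a where a: "a \<in> A" "a \<notin> B"
    using B by blast
  then have "B = A - {a}"
    using B assms(1) by (intro card_subset_eq) auto
  then show "\<exists>a\<in>A. B = A - {a}"
    using a by blast
qed (use assms(1) in auto)

lemma mem_iff_mem_if_even_card_Int:
  assumes "finite R" "0 < k" "k < card R" "s \<in> R" "t \<in> R"
    and even_Int: "\<And>S. S \<subseteq> R \<Longrightarrow> card S = k \<Longrightarrow> even (card (X \<inter> S))"
  shows "s \<in> X \<longleftrightarrow> t \<in> X"
proof (cases "s = t")
  case False
  then have "card (R - {s, t}) = card R - 2"
    using assms(1,4,5) by (simp add: card_Diff_subset)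
  then have "k - 1 \<le> card (R - {s, t})"
    using assms(3) by linarith
  then obtain S where S: "S \<subseteq> R - {s, t}" "card S = k - 1" "finite S"
    by (rule obtain_subset_with_card_n)
  then have "s \<notin> S" "t \<notin> S"
    by auto
  have "insert s S \<subseteq> R" "card (insert s S) = k" "insert t S \<subseteq> R" "card (insert t S) = k"
    using S \<open>s \<notin> S\<close> \<open>t \<notin> S\<close> assms(2,4,5) by auto
  then have "even (card (X \<inter> insert s S))" "even (card (X \<inter> insert t S))"
    by (simp_all add: even_Int)
  moreover have "card (X \<inter> insert u S) = card (X \<inter> S) + (if u \<in> X then 1 else 0)"
    if "u \<notin> S" for u
    using that S(3) by (simp add: Int_insert_right)
  ultimately show ?thesis
    using \<open>s \<notin> S\<close> \<open>t \<notin> S\<close>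
    by (auto split: if_splits)
qed simp

lemma eq_empty_if_even_card_Int:
  assumes "finite R" "X \<subseteq> R" "odd k" "k < card R"
    and even_Int: "\<And>S. S \<subseteq> R \<Longrightarrow> card S = k \<Longrightarrow> even (card (X \<inter> S))"
  shows "X = {}"
proof (rule ccontr)
  assume "X \<noteq> {}"
  then obtain s where "s \<in> X" "s \<in> R"
    using assms(2) by blast
  then have "R \<subseteq> X"
    using mem_iff_mem_if_even_card_Int[OF assms(1) odd_pos[OF assms(3)] assms(4) _ _ even_Int] by blast
  have "k \<le> card R"
    using assms(4) by simp
  then obtain S where "S \<subseteq> R" "card S = k"
    by (rule obtain_subset_with_card_n)
  moreover have "X \<inter> S = S"
    using \<open>S \<subseteq> R\<close> \<open>R \<subseteq> X\<close> by blast
  ultimately show False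
    using even_Int[of S] assms(3) by simp
qed

lemma odd_interval_permutes_odd_to_odd:
  fixes \<sigma> :: "nat \<Rightarrow> nat"
  assumes "odd n" "\<sigma> permutes {1..n}"
  shows "\<exists>i\<in>{1..n}. odd i \<and> odd (\<sigma> i)"
proof (rule ccontr)
  assume "\<not> ?thesis"
  then have "\<sigma> ` {i\<in>{1..n}. odd i} \<subseteq> {i\<in>{1..n}. even i}"
    using permutes_in_image[OF assms(2)] by auto
  then have "card {i\<in>{1..n}. odd i} \<le> card {i\<in>{1..n}. even i}"
    by (intro card_inj_on_le[OF permutes_inj_on[OF assms(2)]]) auto
  moreover have "Suc i \<in> {i\<in>{1..n}. odd i} - {1}" if "i \<in> {1..n}" "even i" for i
  proof -
    have "i \<noteq> n"
      using that assms(1) by auto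
    then show ?thesis
      using that by auto
  qed
  then have "card {i\<in>{1..n}. even i} \<le> card ({i\<in>{1..n}. odd i} - {1})"
    by (intro card_inj_on_le[of Suc]) auto
  moreover have "card ({i\<in>{1..n}. odd i} - {1}) < card {i\<in>{1..n}. odd i}"
    using odd_pos[OF assms(1)] by (intro card_Diff1_less) auto
  ultimately show False
    by linarith
qed

section \<open>The identity and the reversal\<close>

lemma order_preserving_permutes_eq_id:
  fixes \<sigma> :: "nat \<Rightarrow> nat"
  assumes \<sigma>: "\<sigma> permutes {1..n}"
    and ord: "\<And>i s. i \<in> {1..n} \<Longrightarrow> s \<in> {1..n} \<Longrightarrow> s \<noteq> i \<Longrightarrow> \<sigma> s < \<sigma> i \<longleftrightarrow> s < i"
  shows "\<sigma> = id"
proof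
  fix i
  show "\<sigma> i = id i"
  proof (cases "i \<in> {1..n}")
    case True
    have "\<sigma> s < \<sigma> i \<longleftrightarrow> s < i" if "s \<in> {1..n}" for s
      using ord[OF True that] by (cases "s = i") auto
    then have "{s\<in>{1..n}. \<sigma> s < \<sigma> i} = {s\<in>{1..n}. s < i}"
      by auto
    then have "\<sigma> i - 1 = i - 1"
      using card_less_image_permutes[OF \<sigma> True] card_less_in_interval[of i n] True by simp
    moreover have "\<sigma> i \<in> {1..n}"
      using permutes_in_image[OF \<sigma>] True by simp
    ultimately show ?thesis
      using True by auto
  qed (simp add: permutes_not_in[OF \<sigma>])
qed

definition reversal :: "nat \<Rightarrow> nat \<Rightarrow> nat" where
  "reversal n i = (if i \<in> {1..n} then Suc n - i else i)"

lemma reversal_permutes: "reversal n permutes {1..n}"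
  by (rule bij_imp_permutes, rule bij_betwI[where g = "reversal n"]) (auto simp: reversal_def)

lemma reversal_involution: "reversal n \<circ> reversal n = id"
  by (rule ext) (auto simp: reversal_def)

lemma reversal_ne_id: "2 \<le> n \<Longrightarrow> reversal n \<noteq> id"
proof
  assume "2 \<le> n" "reversal n = id"
  then have "reversal n 1 = 1" by simp
  with \<open>2 \<le> n\<close> show False by (simp add: reversal_def)
qed

lemma order_reversing_permutes_eq_reversal:
  fixes \<sigma> :: "nat \<Rightarrow> nat"
  assumes \<sigma>: "\<sigma> permutes {1..n}"
    and ord: "\<And>i s. i \<in> {1..n} \<Longrightarrow> s \<in> {1..n} \<Longrightarrow> s \<noteq> i \<Longrightarrow> \<sigma> s < \<sigma> i \<longleftrightarrow> i < s"
  shows "\<sigma> = reversal n"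
proof
  fix i
  show "\<sigma> i = reversal n i"
  proof (cases "i \<in> {1..n}")
    case True
    have "\<sigma> s < \<sigma> i \<longleftrightarrow> i < s" if "s \<in> {1..n}" for s
      using ord[OF True that] by (cases "s = i") auto
    then have "{s\<in>{1..n}. \<sigma> s < \<sigma> i} = {s\<in>{1..n}. i < s}"
      by auto
    then have "\<sigma> i - 1 = n - i"
      using card_less_image_permutes[OF \<sigma> True] card_greater_in_interval[of n i] by simp
    moreover have "\<sigma> i \<in> {1..n}"
      using permutes_in_image[OF \<sigma>] True by simp
    ultimately show ?thesis
      using True by (auto simp: reversal_def)
  qed (auto simp: permutes_not_in[OF \<sigma>] reversal_def)
qed

lemma card_inversions_on_reversal:
  assumes "S \<subseteq> {1..n}"
  shows "2 * card (inversions_on (reversal n) S) = card S * (card S - 1)"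
proof -
  have "finite S"
    using assms finite_subset by blast
  then show ?thesis
    using assms
  proof (induction S rule: finite_induct)
    case empty
    then show ?case by (simp add: inversions_on_def)
  next
    case (insert i S)
    have "inverted (reversal n) i s" if "s \<in> S" for s
    proof -
      have "i \<in> {1..n}" "s \<in> {1..n}" "s \<noteq> i"
        using insert that by auto
      then show ?thesis
        by (auto simp: inverted_def reversal_def)
    qed
    then have "card (inversions_on (reversal n) (insert i S)) = card (inversions_on (reversal n) S) + card S"
      using card_inversions_on_insert[OF insert(1,2)] by (simp add: Collect_conj_eq Int_absorb2 subsetI)
    moreover have "card (insert i S) = Suc (card S)"
      using insert(1,2) by simp
    ultimately show ?case
      using insert by (cases "card S") (simp_all add: algebra_simps)
  qed
qed

section \<open>Permutations with even inversion count on all k-subsets\<close>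

lemma subset_even_perms_all: "subset_even_perms n n = {\<sigma>. \<sigma> permutes {1..n} \<and> evenperm \<sigma>}"
proof -
  have "S \<subseteq> {1..n} \<and> card S = n \<longleftrightarrow> S = {1..n}" for S
    using card_subset_eq[of "{1..n}" S] by auto
  then show ?thesis
    unfolding subset_even_perms_def by (auto simp: evenperm_iff_even_inversions)
qed

lemma even_card_inverted_iff:
  fixes \<sigma> :: "nat \<Rightarrow> nat"
  assumes \<sigma>: "\<sigma> permutes {1..n}" and j: "j \<in> {1..n}"
  shows "even (card {s\<in>{1..n} - {j}. inverted \<sigma> j s}) \<longleftrightarrow> even (j + \<sigma> j)"
proof -
  have xor: "{s\<in>{1..n}. (s < j) \<noteq> (\<sigma> s < \<sigma> j)} = {s\<in>{1..n} - {j}. inverted \<sigma> j s}"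
    using permutes_inj[OF \<sigma>] by (auto simp: inverted_def inj_eq) (metis less_irrefl nat_neq_iff)+
  have "card {s\<in>{1..n}. s < j} + card {s\<in>{1..n}. \<sigma> s < \<sigma> j} =
      2 * card {s\<in>{1..n}. s < j \<and> \<sigma> s < \<sigma> j} + card {s\<in>{1..n}. (s < j) \<noteq> (\<sigma> s < \<sigma> j)}"
    by (rule card_Collect_add_card_Collect) simp
  moreover have "card {s\<in>{1..n}. s < j} = j - 1"
    using j by (intro card_less_in_interval) simp
  moreover have "card {s\<in>{1..n}. \<sigma> s < \<sigma> j} = \<sigma> j - 1"
    by (rule card_less_image_permutes[OF \<sigma> j])
  moreover have "1 \<le> j" "1 \<le> \<sigma> j"
    using j permutes_in_image[OF \<sigma>] by auto
  moreover have "even x \<longleftrightarrow> even (j + t)"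
    if "a + b = 2 * c + x" "a = j - 1" "b = t - 1" "1 \<le> j" "1 \<le> t" for a b c x t :: nat
    using that by presburger
  ultimately show ?thesis
    unfolding xor[symmetric] by blast
qed

lemma even_inversions_Diff_iff:
  fixes \<sigma> :: "nat \<Rightarrow> nat"
  assumes \<sigma>: "\<sigma> permutes {1..n}" and j: "j \<in> {1..n}"
  shows "even (card (inversions_on \<sigma> ({1..n} - {j}))) \<longleftrightarrow>
    even (card (inversions_on \<sigma> {1..n}) + j + \<sigma> j)"
proof -
  have "card (inversions_on \<sigma> {1..n}) =
      card (inversions_on \<sigma> ({1..n} - {j})) + card {s\<in>{1..n} - {j}. inverted \<sigma> j s}"
    using card_inversions_on_insert[of "{1..n} - {j}" j \<sigma>] j by (simp add: insert_absorb)
  then show ?thesis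
    using even_card_inverted_iff[OF \<sigma> j] by presburger
qed

lemma subset_even_perms_codim_one:
  assumes "odd n"
  shows "subset_even_perms (n - 1) n =
    {\<sigma>. \<sigma> permutes {1..n} \<and> evenperm \<sigma> \<and> (\<forall>i\<in>{1..n}. even (\<sigma> i) \<longleftrightarrow> even i)}"
proof -
  have "S \<subseteq> {1..n} \<and> card S = n - 1 \<longleftrightarrow> (\<exists>j\<in>{1..n}. S = {1..n} - {j})" for S
    using subset_card_eq_card_minus_one_iff[of "{1..n}" S] odd_pos[OF assms] by simp
  then have subsets: "(\<forall>S. S \<subseteq> {1..n} \<and> card S = n - 1 \<longrightarrow> P S) \<longleftrightarrow> (\<forall>j\<in>{1..n}. P ({1..n} - {j}))"
    for P by (metis (no_types, lifting))
  have parity: "(\<forall>j\<in>{1..n}. even (card (inversions_on \<sigma> {1..n}) + j + \<sigma> j)) \<longleftrightarrow>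
      evenperm \<sigma> \<and> (\<forall>i\<in>{1..n}. even (\<sigma> i) \<longleftrightarrow> even i)"
    if \<sigma>: "\<sigma> permutes {1..n}" for \<sigma>
  proof
    assume par: "\<forall>j\<in>{1..n}. even (card (inversions_on \<sigma> {1..n}) + j + \<sigma> j)"
    obtain i where "i \<in> {1..n}" "odd i" "odd (\<sigma> i)"
      using odd_interval_permutes_odd_to_odd[OF assms \<sigma>] by blast
    then have "even (card (inversions_on \<sigma> {1..n}))"
      using par by fastforce
    moreover have "even (\<sigma> i) \<longleftrightarrow> even i" if "i \<in> {1..n}" for i
      using par that calculation by fastforce
    ultimately show "evenperm \<sigma> \<and> (\<forall>i\<in>{1..n}. even (\<sigma> i) \<longleftrightarrow> even i)"
      using evenperm_iff_even_inversions[OF \<sigma>] by blast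
  next
    assume "evenperm \<sigma> \<and> (\<forall>i\<in>{1..n}. even (\<sigma> i) \<longleftrightarrow> even i)"
    then show "\<forall>j\<in>{1..n}. even (card (inversions_on \<sigma> {1..n}) + j + \<sigma> j)"
      using evenperm_iff_even_inversions[OF \<sigma>] by simp
  qed
  have "(\<forall>j\<in>{1..n}. even (card (inversions_on \<sigma> ({1..n} - {j})))) \<longleftrightarrow>
      evenperm \<sigma> \<and> (\<forall>i\<in>{1..n}. even (\<sigma> i) \<longleftrightarrow> even i)"
    if \<sigma>: "\<sigma> permutes {1..n}" for \<sigma>
    using even_inversions_Diff_iff[OF \<sigma>] parity[OF \<sigma>] by blast
  then show ?thesis
    unfolding subset_even_perms_def subsets by blast
qed

lemma even_card_inverted_disagree:
  assumes "\<sigma> \<in> subset_even_perms (card S + 1) n" "S \<subseteq> {1..n}"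
    and i: "i \<in> {1..n} - S" and j: "j \<in> {1..n} - S"
  shows "even (card {s\<in>S. inverted \<sigma> i s \<noteq> inverted \<sigma> j s})"
proof -
  have ev: "even (card (inversions_on \<sigma> T))" if "T \<subseteq> {1..n}" "card T = card S + 1" for T
    using assms(1) that unfolding subset_even_perms_def by blast
  have S_fin: "finite S"
    using finite_subset[OF assms(2)] by simp
  have "even (card (inversions_on \<sigma> (insert i S)))" "even (card (inversions_on \<sigma> (insert j S)))"
    using assms(2) i j S_fin by (auto intro!: ev)
  moreover have "card (inversions_on \<sigma> (insert i S)) = card (inversions_on \<sigma> S) + card {s\<in>S. inverted \<sigma> i s}"
    "card (inversions_on \<sigma> (insert j S)) = card (inversions_on \<sigma> S) + card {s\<in>S. inverted \<sigma> j s}"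
    using card_inversions_on_insert[OF S_fin] i j by blast+
  ultimately have "even (card {s\<in>S. inverted \<sigma> i s} + card {s\<in>S. inverted \<sigma> j s})"
    by (metis even_add)
  then show ?thesis
    using card_Collect_add_card_Collect[OF S_fin, of "inverted \<sigma> i" "inverted \<sigma> j"] by simp
qed

lemma inverted_independent:
  assumes "odd d" "d + 3 \<le> n" and \<sigma>: "\<sigma> \<in> subset_even_perms (d+1) n"
    and ijs: "i \<in> {1..n}" "j \<in> {1..n}" "s \<in> {1..n}" "s \<noteq> i" "s \<noteq> j"
  shows "inverted \<sigma> i s = inverted \<sigma> j s"
proof (cases "i = j")
  case False
  define R where "R = {1..n} - {i, j}"
  define X where "X = {s\<in>R. inverted \<sigma> i s \<noteq> inverted \<sigma> j s}"
  have even_Int: "even (card (X \<inter> S))" if S: "S \<subseteq> R" "card S = d" for S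
  proof -
    have "X \<inter> S = {s\<in>S. inverted \<sigma> i s \<noteq> inverted \<sigma> j s}"
      using S by (auto simp: X_def)
    moreover have "S \<subseteq> {1..n}" "i \<in> {1..n} - S" "j \<in> {1..n} - S"
      using S ijs by (auto simp: R_def)
    ultimately show ?thesis
      using even_card_inverted_disagree[of \<sigma> S n i j] \<sigma> S(2) by simp
  qed
  have "card R = n - 2"
    using False ijs by (simp add: R_def card_Diff_subset)
  then have "d < card R"
    using assms(2) by simp
  moreover have "finite R" "X \<subseteq> R"
    by (auto simp: R_def X_def)
  ultimately have "X = {}"
    using eq_empty_if_even_card_Int[OF _ _ \<open>odd d\<close>] even_Int by blast
  moreover have "s \<in> R"
    using ijs by (simp add: R_def)
  ultimately show ?thesis
    by (auto simp: X_def)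
next
  case True
  then show ?thesis by simp
qed

lemma inverted_eq_inverted_one_two:
  assumes "odd d" "d + 3 \<le> n" "\<sigma> \<in> subset_even_perms (d+1) n"
    and i_s: "i \<in> {1..n}" "s \<in> {1..n}" "s \<noteq> i"
  shows "inverted \<sigma> i s = inverted \<sigma> 1 2"
proof -
  have indep: "inverted \<sigma> i s = inverted \<sigma> j s"
    if "i \<in> {1..n}" "j \<in> {1..n}" "s \<in> {1..n}" "s \<noteq> i" "s \<noteq> j" for i j s
    using inverted_independent[OF assms(1-3) that] .
  have "1 \<in> {1..n}" "2 \<in> {1..n}"
    using assms(2) by auto
  show ?thesis
  proof (cases "s = 1")
    case True
    then show ?thesis
      using indep[of i 2 1] i_s \<open>2 \<in> {1..n}\<close> inverted_commute by auto
  next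
    case False
    then have "inverted \<sigma> i s = inverted \<sigma> s 1"
      using indep[of i 1 s] i_s \<open>1 \<in> {1..n}\<close> inverted_commute by metis
    also have "\<dots> = inverted \<sigma> 2 1"
      using indep[of s 2 1] i_s False \<open>1 \<in> {1..n}\<close> \<open>2 \<in> {1..n}\<close> by auto
    finally show ?thesis
      using inverted_commute by metis
  qed
qed

lemma subset_even_perms_large_eq_id_or_reversal:
  assumes "odd d" "d + 3 \<le> n" and \<sigma>_mem: "\<sigma> \<in> subset_even_perms (d+1) n"
  shows "\<sigma> = id \<or> \<sigma> = reversal n"
proof -
  have \<sigma>: "\<sigma> permutes {1..n}"
    using \<sigma>_mem by (simp add: subset_even_perms_def)
  have ord: "\<sigma> s < \<sigma> i \<longleftrightarrow> (i < s \<longleftrightarrow> inverted \<sigma> 1 2)"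
    if "i \<in> {1..n}" "s \<in> {1..n}" "s \<noteq> i" for i s
    using inverted_eq_inverted_one_two[OF assms that] inverted_iff[of \<sigma> i s] permutes_inj[OF \<sigma>] that
    by (auto simp: inj_eq)
  show ?thesis
  proof (cases "inverted \<sigma> 1 2")
    case True
    then have "\<sigma> = reversal n"
      using ord by (intro order_reversing_permutes_eq_reversal[OF \<sigma>]) auto
    then show ?thesis ..
  next
    case False
    then have "\<sigma> = id"
      using ord by (intro order_preserving_permutes_eq_id[OF \<sigma>]) (auto simp: linorder_neq_iff)
    then show ?thesis ..
  qed
qed

lemma reversal_mem_subset_even_perms_iff:
  assumes "k \<le> n"
  shows "reversal n \<in> subset_even_perms k n \<longleftrightarrow> even (k * (k - 1) div 2)"
proof -
  have inv: "card (inversions_on (reversal n) S) = k * (k - 1) div 2"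
    if "S \<subseteq> {1..n}" "card S = k" for S
    using card_inversions_on_reversal[OF that(1)] that(2) by simp
  have "k \<le> card {1..n}"
    using assms by simp
  then obtain S where S: "S \<subseteq> {1..n}" "card S = k"
    by (rule obtain_subset_with_card_n)
  show ?thesis
  proof
    assume "reversal n \<in> subset_even_perms k n"
    then have "even (card (inversions_on (reversal n) S))"
      using S unfolding subset_even_perms_def by blast
    then show "even (k * (k - 1) div 2)"
      using inv[OF S] by simp
  next
    assume "even (k * (k - 1) div 2)"
    then show "reversal n \<in> subset_even_perms k n"
      unfolding subset_even_perms_def using reversal_permutes inv by simp
  qed
qed

lemma subset_even_perms_large:
  assumes "odd d" "d + 3 \<le> n"
  shows "subset_even_perms (d+1) n = (if even ((d+1) div 2) then {id, reversal n} else {id})"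
proof -
  obtain q where "d + 1 = 2 * q"
    using assms(1) by (metis dvd_def odd_even_add odd_one)
  then have "reversal n \<in> subset_even_perms (d+1) n \<longleftrightarrow> even ((d+1) div 2)"
    using reversal_mem_subset_even_perms_iff[of "d+1" n] assms by simp
  moreover have "id \<in> subset_even_perms (d+1) n"
    by (simp add: subset_even_perms_def permutes_id)
  ultimately show ?thesis
    using subset_even_perms_large_eq_id_or_reversal[OF assms] by auto
qed

lemma involution_subgroup_iso_integer_mod_group:
  assumes "r \<circ> r = id" "r \<noteq> id"
  shows "(sym_group n)\<lparr>carrier := {id, r}\<rparr> \<cong> integer_mod_group 2"
proof (rule is_isoI)
  let ?G = "(sym_group n)\<lparr>carrier := {id, r}\<rparr>"
  let ?h = "\<lambda>p::nat \<Rightarrow> nat. if p = id then (0::int) else 1"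
  have car: "carrier (integer_mod_group 2) = {0, 1}"
    by (auto simp: carrier_integer_mod_group)
  show "?h \<in> iso ?G (integer_mod_group 2)"
    unfolding iso_def hom_def
  proof (intro CollectI conjI)
    show "?h \<in> carrier ?G \<rightarrow> carrier (integer_mod_group 2)"
      using car by auto
    show "\<forall>x\<in>carrier ?G. \<forall>y\<in>carrier ?G. ?h (x \<otimes>\<^bsub>?G\<^esub> y) = ?h x \<otimes>\<^bsub>integer_mod_group 2\<^esub> ?h y"
      using assms by (auto simp: sym_group_def)
    show "bij_betw ?h (carrier ?G) (carrier (integer_mod_group 2))"
      unfolding car using assms(2) by (auto simp: bij_betw_def inj_on_def)
  qed
qed

theorem proposition3p8:
  fixes d n :: nat
  assumes "odd d" and "n \<ge> d + 1"
  shows "(n = d + 1 \<longrightarrow> C_group d n = carrier (alt_group n))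
    \<and> (n = d + 2 \<longrightarrow> C_group d n =
          carrier (alt_group n) \<inter> {\<sigma>. \<forall>i\<in>{1..n}. even (\<sigma> i) \<longleftrightarrow> even i})
    \<and> (n \<ge> d + 3 \<and> even ((d + 1) div 2) \<longrightarrow>
          (sym_group n)\<lparr>carrier := C_group d n\<rparr> \<cong> integer_mod_group 2)
    \<and> (n \<ge> d + 3 \<and> odd ((d + 1) div 2) \<longrightarrow> C_group d n = {id})"
proof (intro conjI impI)
  have alt: "carrier (alt_group m) = {\<sigma>. \<sigma> permutes {1..m} \<and> evenperm \<sigma>}" for m
    by (simp add: alt_group_def sym_group_def)
  show "C_group d n = carrier (alt_group n)" if "n = d + 1"
    using that by (simp only: C_group_eq_subset_even_perms subset_even_perms_all alt)
  show "C_group d n = carrier (alt_group n) \<inter> {\<sigma>. \<forall>i\<in>{1..n}. even (\<sigma> i) \<longleftrightarrow> even i}"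
    if "n = d + 2"
    using that assms(1) subset_even_perms_codim_one[of n]
    by (auto simp: C_group_eq_subset_even_perms alt)
  show "(sym_group n)\<lparr>carrier := C_group d n\<rparr> \<cong> integer_mod_group 2"
    if "n \<ge> d + 3 \<and> even ((d + 1) div 2)"
    using that subset_even_perms_large[OF assms(1)] reversal_ne_id[of n]
      involution_subgroup_iso_integer_mod_group[OF reversal_involution]
    by (simp add: C_group_eq_subset_even_perms)
  show "C_group d n = {id}" if "n \<ge> d + 3 \<and> odd ((d + 1) div 2)"
    using that subset_even_perms_large[OF assms(1)] by (simp add: C_group_eq_subset_even_perms)
qed

end
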